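(* Let $N\ge 2$ and $a>-1$. Let $\mathcal R_N$ be the set of $N\times N$ real correlation matrices $R=[\rho_{jk}]$ (real symmetric positive definite with unit diagonal), with Lebesgue measure $(\mathrm dR)=\prod_{1\le k<j\le N}\mathrm d\rho_{jk}$, and let $R$ be random with probability density $\frac{1}{C_{a,N}}(\det R)^a$ on $\mathcal R_N$, where $C_{a,N}=\int_{\mathcal R_N}(\det R)^a(\mathrm dR)$. Then for real $s>-1-a$, $$\mathbb E\left[(\det R)^s\right]=\prod_{j=1}^{N-1}\left(\frac{B\left(a+s+\frac{j+1}{2},\frac12\right)}{B\left(a+\frac{j+1}{2},\frac12\right)}\right)^j,$$ and $$\mathbb E\left[\log\det R\right]=\sum_{j=1}^{N-1}j\left(\Psi\left(a+\frac{j+1}{2}\right)-\Psi\left(a+1+\frac j2\right)\right).$$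
   Context: $B(x,y)=\Gamma(x)\Gamma(y)/\Gamma(x+y)$ is the Euler beta function and $\Psi=\Gamma'/\Gamma$ is the digamma function. *)

theory Defs
  imports "HOL-Analysis.Analysis"
begin

definition corr_idx :: "nat \<Rightarrow> (nat \<times> nat) set" where
  "corr_idx N = {(j, k). k < j \<and> j < N}"

definition corr_lebesgue :: "nat \<Rightarrow> (nat \<times> nat \<Rightarrow> real) measure" where
  "corr_lebesgue N = PiM (corr_idx N) (\<lambda>_. lborel)"

definition corr_mat :: "(nat \<times> nat \<Rightarrow> real) \<Rightarrow> nat \<Rightarrow> nat \<Rightarrow> real" where
  "corr_mat \<rho> i j = (if i = j then 1 else if j < i then \<rho> (i, j) else \<rho> (j, i))"

definition det_nat :: "nat \<Rightarrow> (nat \<Rightarrow> nat \<Rightarrow> real) \<Rightarrow> real" where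
  "det_nat N A = (\<Sum>p | p permutes {..<N}. of_int (sign p) * (\<Prod>i<N. A i (p i)))"

definition pos_def_nat :: "nat \<Rightarrow> (nat \<Rightarrow> nat \<Rightarrow> real) \<Rightarrow> bool" where
  "pos_def_nat N A = (\<forall>x :: nat \<Rightarrow> real. (\<exists>i<N. x i \<noteq> 0) \<longrightarrow>
      (\<Sum>i<N. \<Sum>j<N. x i * A i j * x j) > 0)"

definition corr_set :: "nat \<Rightarrow> (nat \<times> nat \<Rightarrow> real) set" where
  "corr_set N = {\<rho> \<in> space (corr_lebesgue N). pos_def_nat N (corr_mat \<rho>)}"

definition corr_det :: "nat \<Rightarrow> (nat \<times> nat \<Rightarrow> real) \<Rightarrow> real" where
  "corr_det N \<rho> = det_nat N (corr_mat \<rho>)"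

definition corr_const :: "nat \<Rightarrow> real \<Rightarrow> real" where
  "corr_const N a = (LINT \<rho>:corr_set N|corr_lebesgue N. corr_det N \<rho> powr a)"

end

theory Submission
  imports Defs "Jordan_Normal_Form.Determinant"
begin

(* Write a correlation matrix of size N + 1 as [R r; r^T 1]. It is positive definite iff R is
   and 1 - r^T R^-1 r > 0, and then its determinant is det R * (1 - r^T R^-1 r). Integrating out
   r one coordinate at a time (pivoting on one diagonal entry of R at a time, i.e. taking Schur
   complements), each coordinate contributes a one-dimensional Beta integral:
     int (det [R r; r^T 1])^b dr = (det R)^(b+1/2) * prod_{j=1..N} B(1/2, b + (j+1)/2).
   Hence by induction int_{R_N} (det R)^b = prod_{j=1..N-1} B(b + (j+1)/2, 1/2)^j for b > -1.
   E[(det R)^s] is a quotient of two such integrals, and E[log det R] is the logarithmic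
   derivative of this product at b = a, obtained by differentiating under the integral sign. *)

section \<open>Schur complements\<close>

definition skip :: "nat \<Rightarrow> nat \<Rightarrow> nat" where
  "skip k i = (if i < k then i else Suc i)"

definition schur_compl :: "nat \<Rightarrow> (nat \<Rightarrow> nat \<Rightarrow> real) \<Rightarrow> nat \<Rightarrow> nat \<Rightarrow> real" where
  "schur_compl k A i j = A (skip k i) (skip k j) - A (skip k i) k * A k (skip k j) / A k k"

definition symmetric_nat :: "nat \<Rightarrow> (nat \<Rightarrow> nat \<Rightarrow> real) \<Rightarrow> bool" where
  "symmetric_nat n A \<longleftrightarrow> (\<forall>i<n. \<forall>j<n. A i j = A j i)"

definition quad_form :: "nat \<Rightarrow> (nat \<Rightarrow> nat \<Rightarrow> real) \<Rightarrow> (nat \<Rightarrow> real) \<Rightarrow> real" where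
  "quad_form n A x = (\<Sum>i<n. \<Sum>j<n. x i * A i j * x j)"

lemma skip_neq [simp]: "skip k i \<noteq> k"
  by (simp add: skip_def)

lemma skip_less: "i < n \<Longrightarrow> skip k i < Suc n"
  by (simp add: skip_def)

lemma inj_skip: "inj (skip k)"
  by (auto simp: inj_def skip_def split: if_splits)

lemma lessThan_Suc_eq_insert_skip:
  assumes "k < Suc n"
  shows "{..<Suc n} = insert k (skip k ` {..<n})"
proof (intro equalityI subsetI)
  fix a assume a: "a \<in> {..<Suc n}"
  show "a \<in> insert k (skip k ` {..<n})"
  proof (cases "a = k")
    case False
    then have "a = skip k (if a < k then a else a - 1)" "(if a < k then a else a - 1) < n"
      using a assms by (auto simp: skip_def)
    then show ?thesis by blast
  qed simp
qed (use assms in \<open>auto simp: skip_less\<close>)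

lemma sum_lessThan_Suc_skip:
  assumes "k < Suc n"
  shows "(\<Sum>a<Suc n. f a) = f k + (\<Sum>i<n. f (skip k i))"
  unfolding lessThan_Suc_eq_insert_skip[OF assms]
  by (subst sum.insert) (auto simp: sum.reindex inj_on_subset[OF inj_skip] dest: sym)

lemma det_nat_eq_det: "det_nat n A = det (mat n n (\<lambda>(i, j). A i j))"
  unfolding det_nat_def det_def'[OF mat_carrier]
  by (intro sum.cong) (auto simp: atLeast0LessThan intro!: prod.cong arg_cong2[where f="(*)"]
      dest: permutes_in_image)

lemma det_nat_0 [simp]: "det_nat 0 A = 1"
  by (simp add: det_nat_def)

lemma det_nat_cong:
  "(\<And>i j. i < n \<Longrightarrow> j < n \<Longrightarrow> A i j = B i j) \<Longrightarrow> det_nat n A = det_nat n B"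
  unfolding det_nat_def
  by (intro sum.cong refl arg_cong2[where f="(*)"] prod.cong) (auto dest: permutes_in_image)

lemma pos_def_nat_cong:
  "(\<And>i j. i < n \<Longrightarrow> j < n \<Longrightarrow> A i j = B i j) \<Longrightarrow> pos_def_nat n A = pos_def_nat n B"
  unfolding pos_def_nat_def by simp

lemma det_one_add_column:
  assumes k: "k < Suc n"
  shows "det (mat (Suc n) (Suc n) (\<lambda>(i, j). if i = j then 1 else if j = k then v i else 0)) = (1::real)"
    (is "det ?C = 1")
proof -
  have C: "?C \<in> carrier_mat (Suc n) (Suc n)"
    by simp
  have "mat_delete ?C k k = 1\<^sub>m n"
    by (rule eq_matI) (auto simp: mat_delete_def)
  then have "cofactor ?C k k = 1"
    by (simp add: cofactor_def)
  have "det ?C = (\<Sum>j<Suc n. if j = k then cofactor ?C k k else 0)"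
    unfolding laplace_expansion_row[OF C k] by (intro sum.cong) (auto simp: k)
  also have "\<dots> = 1"
    using k \<open>cofactor ?C k k = 1\<close> by (subst sum.delta) auto
  finally show ?thesis .
qed

text \<open>Subtracting multiples of row \<open>k\<close> clears column \<open>k\<close> outside the pivot; Laplace expansion
  along that column leaves the Schur complement.\<close>
lemma det_nat_schur_compl:
  assumes k: "k < Suc n" and Akk: "A k k \<noteq> 0"
  shows "det_nat (Suc n) A = A k k * det_nat n (schur_compl k A)"
proof -
  define C where "C = mat (Suc n) (Suc n)
    (\<lambda>(i, j). if i = j then 1 else if j = k then - A i k / A k k else (0::real))"
  have C: "C \<in> carrier_mat (Suc n) (Suc n)" by (simp add: C_def)
  have "det C = 1"
    unfolding C_def using k by (rule det_one_add_column)
  define B where "B = C * mat (Suc n) (Suc n) (\<lambda>(i, j). A i j)"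
  have B: "B \<in> carrier_mat (Suc n) (Suc n)" using C by (simp add: B_def)
  have B_entry: "B $$ (i, j) = (if i = k then A i j else A i j - A i k * A k j / A k k)"
    if "i < Suc n" "j < Suc n" for i j
  proof -
    have "B $$ (i, j) = (\<Sum>l\<in>{0..<Suc n}. C $$ (i, l) * A l j)"
      using that C by (simp add: B_def scalar_prod_def)
    also have "\<dots> = (\<Sum>l\<in>{0..<Suc n}. (if l = i then A l j else 0) +
        (if l = k \<and> i \<noteq> k then - A i k / A k k * A l j else 0))"
      using that by (intro sum.cong) (auto simp: C_def)
    also have "\<dots> = (if i = k then A i j else A i j - A i k * A k j / A k k)"
      using that k by (simp add: sum.distrib)
    finally show ?thesis .
  qed
  have det_B: "det B = det_nat (Suc n) A"
    using \<open>det C = 1\<close> det_mult[OF C, of "mat (Suc n) (Suc n) (\<lambda>(i, j). A i j)"]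
    by (simp add: B_def det_nat_eq_det)
  have "mat_delete B k k = mat n n (\<lambda>(i, j). schur_compl k A i j)"
    using B by (intro eq_matI) (auto simp: mat_delete_def schur_compl_def skip_def B_entry k)
  then have "cofactor B k k = det_nat n (schur_compl k A)"
    by (simp add: cofactor_def det_nat_eq_det)
  have "det B = (\<Sum>i<Suc n. if i = k then A k k * cofactor B k k else 0)"
    unfolding laplace_expansion_column[OF B k] by (intro sum.cong) (auto simp: B_entry k Akk)
  also have "\<dots> = A k k * det_nat n (schur_compl k A)"
    using k \<open>cofactor B k k = _\<close> by (subst sum.delta) auto
  finally show ?thesis
    unfolding det_B .
qed

lemma quad_form_schur_compl:
  assumes k: "k < Suc n" and S: "symmetric_nat (Suc n) A" and Akk: "A k k \<noteq> 0"
  shows "quad_form (Suc n) A z =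
    A k k * (z k + (\<Sum>i<n. A k (skip k i) * z (skip k i)) / A k k)\<^sup>2 +
    quad_form n (schur_compl k A) (\<lambda>i. z (skip k i))"
proof -
  define L where "L = (\<Sum>i<n. A k (skip k i) * z (skip k i))"
  define R where "R = (\<Sum>i<n. \<Sum>j<n. z (skip k i) * A (skip k i) (skip k j) * z (skip k j))"
  have sym: "A (skip k i) k = A k (skip k i)" if "i < n" for i
    using S k skip_less[OF that] unfolding symmetric_nat_def by auto
  have "quad_form (Suc n) A z = z k * A k k * z k + (\<Sum>j<n. z k * A k (skip k j) * z (skip k j)) +
      ((\<Sum>i<n. z (skip k i) * A (skip k i) k * z k) + R)"
    unfolding quad_form_def sum_lessThan_Suc_skip[OF k] sum.distrib R_def by simp
  also have "(\<Sum>j<n. z k * A k (skip k j) * z (skip k j)) = z k * L"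
    unfolding L_def by (auto simp: sum_distrib_left intro!: sum.cong)
  also have "(\<Sum>i<n. z (skip k i) * A (skip k i) k * z k) = z k * L"
    unfolding L_def by (auto simp: sum_distrib_left sym intro!: sum.cong)
  finally have lhs: "quad_form (Suc n) A z = z k * A k k * z k + 2 * (z k * L) + R"
    by simp
  have "L * L / A k k = (\<Sum>i<n. \<Sum>j<n.
      z (skip k i) * (A (skip k i) k * A k (skip k j) / A k k) * z (skip k j))"
    unfolding L_def sum_product sum_divide_distrib by (intro sum.cong refl) (simp add: sym)
  then have rhs: "quad_form n (schur_compl k A) (\<lambda>i. z (skip k i)) = R - L * L / A k k"
    unfolding quad_form_def schur_compl_def R_def
    by (simp add: right_diff_distrib left_diff_distrib sum_subtractf)
  have "A k k * (z k + L / A k k)\<^sup>2 = z k * A k k * z k + 2 * (z k * L) + L * L / A k k"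
    using Akk by (simp add: power2_eq_square field_simps)
  then show ?thesis
    unfolding L_def[symmetric] lhs rhs by simp
qed

lemma pos_def_nat_0 [simp]: "pos_def_nat 0 A"
  by (simp add: pos_def_nat_def)

lemma pos_def_nat_iff_quad_form:
  "pos_def_nat n A \<longleftrightarrow> (\<forall>x. (\<exists>i<n. x i \<noteq> 0) \<longrightarrow> quad_form n A x > 0)"
  by (simp add: pos_def_nat_def quad_form_def)

lemma pos_def_nat_diag_pos:
  assumes "pos_def_nat n A" "k < n"
  shows "A k k > 0"
proof -
  define e where "e i = (if i = k then 1 else 0 :: real)" for i
  have "(\<Sum>j<n. e i * A i j * e j) = (if i = k then A k k else 0)" for i
    using \<open>k < n\<close> by (simp add: e_def if_distrib[of "\<lambda>x. _ * x"] sum.delta cong: if_cong)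
  then have "quad_form n A e = A k k"
    using \<open>k < n\<close> by (simp add: quad_form_def sum.delta)
  moreover have "\<exists>i<n. e i \<noteq> 0"
    using \<open>k < n\<close> by (auto simp: e_def)
  then have "quad_form n A e > 0"
    using assms(1) unfolding pos_def_nat_iff_quad_form by blast
  ultimately show ?thesis
    by simp
qed

lemma pos_def_nat_schur_compl:
  assumes k: "k < Suc n" and S: "symmetric_nat (Suc n) A" and pd: "pos_def_nat (Suc n) A"
  shows "pos_def_nat n (schur_compl k A)"
  unfolding pos_def_nat_iff_quad_form
proof (intro allI impI)
  fix y :: "nat \<Rightarrow> real"
  assume "\<exists>i<n. y i \<noteq> 0"
  then obtain i where "i < n" "y i \<noteq> 0"
    by blast
  have Akk: "A k k > 0"
    using pd k by (rule pos_def_nat_diag_pos)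
  \<comment> \<open>choose the pivot coordinate that makes the completed square vanish\<close>
  define z where "z a = (if a = k then - (\<Sum>i<n. A k (skip k i) * y i) / A k k
    else if a < k then y a else y (a - 1))" for a
  have z_skip: "z (skip k i) = y i" for i
    by (auto simp: z_def skip_def)
  have z_k: "z k = - (\<Sum>i<n. A k (skip k i) * y i) / A k k"
    by (simp add: z_def)
  have "quad_form (Suc n) A z = quad_form n (schur_compl k A) y"
    using quad_form_schur_compl[OF k S, of z] Akk by (simp add: z_skip z_k)
  moreover have "\<exists>a<Suc n. z a \<noteq> 0"
    using \<open>i < n\<close> \<open>y i \<noteq> 0\<close> by (intro exI[of _ "skip k i"]) (simp add: z_skip skip_less)
  then have "quad_form (Suc n) A z > 0"
    using pd unfolding pos_def_nat_iff_quad_form by blast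
  ultimately show "quad_form n (schur_compl k A) y > 0"
    by simp
qed

lemma pos_def_nat_of_schur_compl:
  assumes k: "k < Suc n" and S: "symmetric_nat (Suc n) A"
    and Akk: "A k k > 0" and pd: "pos_def_nat n (schur_compl k A)"
  shows "pos_def_nat (Suc n) A"
  unfolding pos_def_nat_iff_quad_form
proof (intro allI impI)
  fix z :: "nat \<Rightarrow> real"
  assume "\<exists>a<Suc n. z a \<noteq> 0"
  define L where "L = (\<Sum>i<n. A k (skip k i) * z (skip k i))"
  have Q: "quad_form (Suc n) A z =
      A k k * (z k + L / A k k)\<^sup>2 + quad_form n (schur_compl k A) (\<lambda>i. z (skip k i))"
    unfolding L_def using Akk by (intro quad_form_schur_compl[OF k S]) simp
  show "quad_form (Suc n) A z > 0"
  proof (cases "\<exists>i<n. z (skip k i) \<noteq> 0")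
    case True
    then have "quad_form n (schur_compl k A) (\<lambda>i. z (skip k i)) > 0"
      using pd by (simp add: pos_def_nat_iff_quad_form)
    then show ?thesis
      using Q Akk by (simp add: add_nonneg_pos)
  next
    case False
    obtain a where "a < Suc n" "z a \<noteq> 0"
      using \<open>\<exists>a<Suc n. z a \<noteq> 0\<close> by blast
    with False have "z k \<noteq> 0"
      using lessThan_Suc_eq_insert_skip[OF k] by (cases "a = k") auto
    moreover have "L = 0" "quad_form n (schur_compl k A) (\<lambda>i. z (skip k i)) = 0"
      using False by (auto simp: L_def quad_form_def)
    ultimately show ?thesis
      using Q Akk by simp
  qed
qed

lemma pos_def_nat_schur_compl_iff:
  assumes "k < Suc n" and "symmetric_nat (Suc n) A"
  shows "pos_def_nat (Suc n) A \<longleftrightarrow> A k k > 0 \<and> pos_def_nat n (schur_compl k A)"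
  using assms pos_def_nat_diag_pos pos_def_nat_schur_compl pos_def_nat_of_schur_compl by blast

lemma symmetric_nat_schur_compl:
  assumes k: "k < Suc n" and S: "symmetric_nat (Suc n) A"
  shows "symmetric_nat n (schur_compl k A)"
  unfolding symmetric_nat_def
proof (intro allI impI)
  fix i j assume "i < n" "j < n"
  then have "A (skip k i) (skip k j) = A (skip k j) (skip k i)"
    "A (skip k i) k = A k (skip k i)" "A (skip k j) k = A k (skip k j)"
    using S skip_less k unfolding symmetric_nat_def by auto
  then show "schur_compl k A i j = schur_compl k A j i"
    unfolding schur_compl_def by simp
qed

lemma det_nat_pos: "symmetric_nat n A \<Longrightarrow> pos_def_nat n A \<Longrightarrow> det_nat n A > 0"
proof (induction n arbitrary: A)
  case (Suc n)
  then have "A n n > 0" "pos_def_nat n (schur_compl n A)"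
    using pos_def_nat_schur_compl_iff[of n n A] by auto
  moreover have "symmetric_nat n (schur_compl n A)"
    using Suc.prems(1) by (simp add: symmetric_nat_schur_compl)
  ultimately show ?case
    using Suc.IH det_nat_schur_compl[of n n A] by simp
qed simp

lemma pos_def_nat_Suc_imp: "pos_def_nat (Suc n) A \<Longrightarrow> pos_def_nat n A"
  unfolding pos_def_nat_iff_quad_form
proof (intro allI impI)
  fix x :: "nat \<Rightarrow> real"
  assume pd: "\<forall>x. (\<exists>i<Suc n. x i \<noteq> 0) \<longrightarrow> quad_form (Suc n) A x > 0"
    and "\<exists>i<n. x i \<noteq> 0"
  then have "\<exists>i<Suc n. (x(n := 0)) i \<noteq> 0"
    by auto
  with pd have "quad_form (Suc n) A (x(n := 0)) > 0"
    by blast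
  then show "quad_form n A x > 0"
    by (simp add: quad_form_def)
qed

lemma borel_measurable_det_nat:
  assumes "\<And>i j. i < n \<Longrightarrow> j < n \<Longrightarrow> (\<lambda>y. A y i j) \<in> borel_measurable M"
  shows "(\<lambda>y. det_nat n (A y)) \<in> borel_measurable M"
  unfolding det_nat_def
  by (intro borel_measurable_sum borel_measurable_times borel_measurable_prod
      borel_measurable_const assms) (auto dest: permutes_in_image)

text \<open>Positive definiteness is decided by successive pivots, each a rational function of the entries.\<close>
lemma sets_pos_def_nat:
  "(\<And>y. symmetric_nat n (A y)) \<Longrightarrow>
    (\<And>i j. i < n \<Longrightarrow> j < n \<Longrightarrow> (\<lambda>y. A y i j) \<in> borel_measurable M) \<Longrightarrow>
    {y \<in> space M. pos_def_nat n (A y)} \<in> sets M"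
proof (induction n arbitrary: A)
  case 0
  then show ?case by simp
next
  case (Suc n)
  have "{y \<in> space M. pos_def_nat (Suc n) (A y)} =
      {y \<in> space M. A y n n > 0} \<inter> {y \<in> space M. pos_def_nat n (schur_compl n (A y))}"
    using pos_def_nat_schur_compl_iff[OF lessI Suc.prems(1)] by blast
  moreover have "{y \<in> space M. A y n n > 0} \<in> sets M"
    using Suc.prems(2)[OF lessI lessI] by measurable
  moreover have "{y \<in> space M. pos_def_nat n (schur_compl n (A y))} \<in> sets M"
  proof (rule Suc.IH)
    show "symmetric_nat n (schur_compl n (A y))" for y
      using Suc.prems(1) by (simp add: symmetric_nat_schur_compl)
    fix i j assume "i < n" "j < n"
    then have [measurable]: "(\<lambda>y. A y i j) \<in> borel_measurable M" "(\<lambda>y. A y i n) \<in> borel_measurable M"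
        "(\<lambda>y. A y n j) \<in> borel_measurable M" "(\<lambda>y. A y n n) \<in> borel_measurable M"
      using Suc.prems(2) by auto
    have "schur_compl n (A y) i j = A y i j - A y i n * A y n j / A y n n" for y
      using \<open>i < n\<close> \<open>j < n\<close> by (simp add: schur_compl_def skip_def)
    then show "(\<lambda>y. schur_compl n (A y) i j) \<in> borel_measurable M"
      by simp
  qed
  ultimately show ?case by simp
qed

section \<open>Bordered matrices\<close>

definition pd_det_powr :: "nat \<Rightarrow> real \<Rightarrow> (nat \<Rightarrow> nat \<Rightarrow> real) \<Rightarrow> ennreal" where
  "pd_det_powr n b A = (if pos_def_nat n A then ennreal (det_nat n A powr b) else 0)"

lemma pd_det_powr_cong:
  "(\<And>i j. i < n \<Longrightarrow> j < n \<Longrightarrow> A i j = B i j) \<Longrightarrow> pd_det_powr n b A = pd_det_powr n b B"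
  unfolding pd_det_powr_def using det_nat_cong pos_def_nat_cong by metis

lemma borel_measurable_pd_det_powr:
  assumes "\<And>y. symmetric_nat n (A y)"
    and "\<And>i j. i < n \<Longrightarrow> j < n \<Longrightarrow> (\<lambda>y. A y i j) \<in> borel_measurable M"
  shows "(\<lambda>y. pd_det_powr n b (A y)) \<in> borel_measurable M"
proof -
  have [measurable]: "{y \<in> space M. pos_def_nat n (A y)} \<in> sets M"
    using assms by (rule sets_pos_def_nat)
  have [measurable]: "(\<lambda>y. det_nat n (A y)) \<in> borel_measurable M"
    using assms(2) by (rule borel_measurable_det_nat)
  show ?thesis
    unfolding pd_det_powr_def by measurable
qed

definition border_mat ::
  "nat \<Rightarrow> (nat \<Rightarrow> nat \<Rightarrow> real) \<Rightarrow> (nat \<Rightarrow> real) \<Rightarrow> real \<Rightarrow> nat \<Rightarrow> nat \<Rightarrow> real" where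
  "border_mat n M r c i j =
    (if i < n \<and> j < n then M i j else if i < n then r i else if j < n then r j else c)"

lemma symmetric_nat_border_mat: "symmetric_nat m M \<Longrightarrow> symmetric_nat (Suc m) (border_mat m M r c)"
  by (auto simp: symmetric_nat_def border_mat_def)

lemma pos_def_nat_border_mat_imp: "pos_def_nat (Suc n) (border_mat n M r c) \<Longrightarrow> pos_def_nat n M"
  using pos_def_nat_Suc_imp pos_def_nat_cong[of n "border_mat n M r c" M]
  by (simp add: border_mat_def)

lemma pd_det_powr_border_mat_cong:
  "(\<And>k. k < m \<Longrightarrow> r k = r' k) \<Longrightarrow> c = c' \<Longrightarrow>
    pd_det_powr (Suc m) b (border_mat m M r c) = pd_det_powr (Suc m) b (border_mat m M r' c')"
  by (rule pd_det_powr_cong) (auto simp: border_mat_def)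

lemma pd_det_powr_border_mat_0:
  "pd_det_powr (Suc 0) b (border_mat 0 M r c) = (if c > 0 then ennreal (c powr b) else 0)"
proof -
  have "symmetric_nat (Suc 0) (border_mat 0 M r c)"
    by (simp add: symmetric_nat_def)
  then have "pos_def_nat (Suc 0) (border_mat 0 M r c) \<longleftrightarrow> c > 0"
    using pos_def_nat_schur_compl_iff[of 0 0] by (simp add: border_mat_def)
  moreover have "c > 0 \<Longrightarrow> det_nat (Suc 0) (border_mat 0 M r c) = c"
    using det_nat_schur_compl[of 0 0 "border_mat 0 M r c"] by (simp add: border_mat_def)
  ultimately show ?thesis
    unfolding pd_det_powr_def by simp
qed

text \<open>Pivoting on the last diagonal entry \<open>M m m\<close> of \<open>M\<close> (not on the corner) keeps the border shape.\<close>
lemma schur_compl_border_mat: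
  assumes S: "symmetric_nat (Suc m) M" and "i < Suc m" "j < Suc m"
  shows "schur_compl m (border_mat (Suc m) M r c) i j =
    border_mat m (schur_compl m M) (\<lambda>k. r k - M k m * r m / M m m) (c - r m * r m / M m m) i j"
proof -
  have "M m j = M j m" if "j < m" for j
    using S that unfolding symmetric_nat_def by auto
  then show ?thesis
    using assms(2,3) by (cases "i < m"; cases "j < m") (auto simp: schur_compl_def border_mat_def skip_def)
qed

lemma pd_det_powr_border_mat_Suc:
  assumes S: "symmetric_nat (Suc m) M" and P: "pos_def_nat (Suc m) M"
  shows "pd_det_powr (Suc (Suc m)) b (border_mat (Suc m) M r c) = ennreal (M m m powr b) *
    pd_det_powr (Suc m) b
      (border_mat m (schur_compl m M) (\<lambda>k. r k - M k m * r m / M m m) (c - r m * r m / M m m))"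
proof -
  define B where "B = border_mat (Suc m) M r c"
  define B' where "B' = border_mat m (schur_compl m M) (\<lambda>k. r k - M k m * r m / M m m) (c - r m * r m / M m m)"
  have Mmm: "M m m > 0"
    using P by (rule pos_def_nat_diag_pos) simp
  have B_mm: "B m m = M m m"
    by (simp add: B_def border_mat_def)
  have "symmetric_nat (Suc (Suc m)) B"
    unfolding B_def using S by (rule symmetric_nat_border_mat)
  then have pd_B: "pos_def_nat (Suc (Suc m)) B \<longleftrightarrow> pos_def_nat (Suc m) B'"
    using pos_def_nat_schur_compl_iff[of m "Suc m" B] pos_def_nat_cong[of "Suc m" "schur_compl m B" B']
      schur_compl_border_mat[OF S] B_mm Mmm by (simp add: B_def B'_def)
  have det_B: "det_nat (Suc (Suc m)) B = M m m * det_nat (Suc m) B'"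
    using det_nat_schur_compl[of m "Suc m" B] det_nat_cong[of "Suc m" "schur_compl m B" B']
      schur_compl_border_mat[OF S] B_mm Mmm by (simp add: B_def B'_def)
  have "symmetric_nat (Suc m) B'"
    unfolding B'_def using S by (intro symmetric_nat_border_mat symmetric_nat_schur_compl) simp
  then have "pos_def_nat (Suc m) B' \<Longrightarrow> det_nat (Suc m) B' > 0"
    by (rule det_nat_pos)
  then show ?thesis
    using pd_B det_B Mmm unfolding B_def[symmetric] B'_def[symmetric] pd_det_powr_def
    by (simp add: powr_mult ennreal_mult)
qed

section \<open>Integrating out a bordering row\<close>

lemma Beta_real_pos: "x > 0 \<Longrightarrow> y > 0 \<Longrightarrow> Beta x y > (0::real)"
  by (simp add: Beta_def)

text \<open>After the substitution \<open>t = x\<^sup>2\<close> this is the Beta integral; the argument follows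
  the volume computation for balls in the library.\<close>
lemma nn_integral_one_minus_square_powr:
  fixes \<beta> :: real
  assumes \<beta>: "\<beta> > -1"
  shows "(\<integral>\<^sup>+x. ennreal (if x\<^sup>2 < 1 then (1 - x\<^sup>2) powr \<beta> else 0) \<partial>lborel) =
    ennreal (Beta (1 / 2) (\<beta> + 1))"
proof -
  have reflect: "(\<integral>\<^sup>+ x. ennreal ((1 - x\<^sup>2) powr \<beta> * indicator {0..1} x) \<partial>lborel) =
      (\<integral>\<^sup>+ x. ennreal ((1 - x\<^sup>2) powr \<beta> * indicator {-1..0} x) \<partial>lborel)"
    by (subst nn_integral_real_affine[of _ "-1" 0]) (auto simp: indicator_def intro!: nn_integral_cong)
  have "((\<lambda>t. t powr (-1 / 2) * (1 - t) powr \<beta>) has_integral Beta (1 / 2) (\<beta> + 1)) {0..1}"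
    using has_integral_Beta_real[of "1/2" "\<beta> + 1"] \<beta> by simp
  from nn_integral_has_integral_lebesgue[OF _ this]
  have "ennreal (Beta (1 / 2) (\<beta> + 1)) =
      nn_integral lborel (\<lambda>t. ennreal (t powr (-1 / 2) * (1 - t) powr \<beta> * indicator {0^2..1^2} t))"
    by (simp add: mult_ac ennreal_mult' ennreal_indicator)
  also have "\<dots> = (\<integral>\<^sup>+ x. ennreal (x\<^sup>2 powr - (1 / 2) * (1 - x\<^sup>2) powr \<beta> * (2 * x) *
      indicator {0..1} x) \<partial>lborel)"
    by (subst nn_integral_substitution[where g = "\<lambda>x. x ^ 2" and g' = "\<lambda>x. 2 * x"])
       (auto intro!: derivative_eq_intros continuous_intros simp: set_borel_measurable_def)
  also have "\<dots> = (\<integral>\<^sup>+ x. 2 * ennreal ((1 - x\<^sup>2) powr \<beta> * indicator {0..1} x) \<partial>lborel)"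
    by (intro nn_integral_cong_AE AE_I[of _ _ "{0}"])
       (auto simp: indicator_def powr_minus powr_half_sqrt field_split_simps ennreal_mult')
  also have "\<dots> = (\<integral>\<^sup>+ x. ennreal ((1 - x\<^sup>2) powr \<beta> * indicator {-1..0} x) \<partial>lborel) +
      (\<integral>\<^sup>+ x. ennreal ((1 - x\<^sup>2) powr \<beta> * indicator {0..1} x) \<partial>lborel)"
    using reflect by (simp add: mult_2 nn_integral_add)
  also have "\<dots> = (\<integral>\<^sup>+ x. ennreal ((1 - x\<^sup>2) powr \<beta> *
      (indicator {-1..0} x + indicator {0..1} x)) \<partial>lborel)"
    by (subst nn_integral_add [symmetric]) (auto simp: algebra_simps)
  also have "\<dots> = (\<integral>\<^sup>+x. ennreal (if x\<^sup>2 < 1 then (1 - x\<^sup>2) powr \<beta> else 0) \<partial>lborel)"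
    by (intro nn_integral_cong_AE AE_I[of _ _ "{0}"])
      (auto simp: indicator_def abs_square_less_1 abs_square_eq_1[symmetric] abs_if)
  finally show ?thesis ..
qed

lemma nn_integral_shifted_beta:
  fixes \<beta> c d v :: real
  assumes \<beta>: "\<beta> > -1" and d: "d > 0"
  shows "(\<integral>\<^sup>+t. ennreal (if c - (t - v)\<^sup>2 / d > 0 then (c - (t - v)\<^sup>2 / d) powr \<beta> else 0) \<partial>lborel) =
    ennreal (if c > 0 then sqrt (c * d) * c powr \<beta> * Beta (1 / 2) (\<beta> + 1) else 0)"
proof (cases "c > 0")
  case True
  define \<sigma> where "\<sigma> = sqrt (c * d)"
  have \<sigma>: "\<sigma> > 0" "\<sigma>\<^sup>2 = c * d"
    using True d by (simp_all add: \<sigma>_def)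
  have "(c - (v + \<sigma> * x - v)\<^sup>2 / d) = c * (1 - x\<^sup>2)" for x
    using d by (simp add: power_mult_distrib \<sigma> field_simps)
  then have integrand: "ennreal (if c - (v + \<sigma> * x - v)\<^sup>2 / d > 0 then (c - (v + \<sigma> * x - v)\<^sup>2 / d) powr \<beta> else 0)
      = ennreal (c powr \<beta>) * ennreal (if x\<^sup>2 < 1 then (1 - x\<^sup>2) powr \<beta> else 0)" for x
    using True by (simp add: zero_less_mult_iff powr_mult ennreal_mult'[symmetric])
  have "(\<integral>\<^sup>+t. ennreal (if c - (t - v)\<^sup>2 / d > 0 then (c - (t - v)\<^sup>2 / d) powr \<beta> else 0) \<partial>lborel)
      = \<bar>\<sigma>\<bar> * (\<integral>\<^sup>+x. ennreal (if c - (v + \<sigma> * x - v)\<^sup>2 / d > 0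
          then (c - (v + \<sigma> * x - v)\<^sup>2 / d) powr \<beta> else 0) \<partial>lborel)"
    using \<sigma> by (intro nn_integral_real_affine) auto
  also have "\<dots> = \<bar>\<sigma>\<bar> * (ennreal (c powr \<beta>) * ennreal (Beta (1 / 2) (\<beta> + 1)))"
    unfolding integrand by (subst nn_integral_cmult) (auto simp: nn_integral_one_minus_square_powr[OF \<beta>])
  finally show ?thesis
    using \<sigma> True by (simp add: \<sigma>_def ennreal_mult'[symmetric] mult.assoc)
next
  case False
  then have "\<not> c - (t - v)\<^sup>2 / d > 0" for t
    using d by (smt (verit) divide_nonneg_pos zero_le_power2)
  then show ?thesis
    using False by simp
qed

definition row_beta_prod :: "nat \<Rightarrow> real \<Rightarrow> real" where
  "row_beta_prod m b = (\<Prod>j=1..m. Beta (1/2) (b + (real j + 1) / 2))"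

lemma row_beta_prod_pos:
  assumes "b > -1"
  shows "row_beta_prod m b > 0"
proof -
  have "b + (real j + 1) / 2 > 0" if "j \<ge> 1" for j
    using assms that by (simp add: field_simps)
  then show ?thesis
    unfolding row_beta_prod_def by (intro prod_pos Beta_real_pos) auto
qed

lemma row_beta_prod_Suc: "row_beta_prod (Suc m) b = row_beta_prod m b * Beta (1/2) (b + real m / 2 + 1)"
  unfolding row_beta_prod_def by (simp add: prod.nat_ivl_Suc' field_simps)

lemma borel_measurable_pd_det_powr_border_row:
  assumes "symmetric_nat m M" and "Pair p ` {..<m} \<subseteq> J"
  shows "(\<lambda>y. pd_det_powr (Suc m) b (border_mat m M (\<lambda>k. y (p, k) - u k) c))
    \<in> borel_measurable (PiM J (\<lambda>_. lborel))"
proof (rule borel_measurable_pd_det_powr)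
  show "symmetric_nat (Suc m) (border_mat m M (\<lambda>k. y (p, k) - u k) c)" for y
    using assms(1) by (rule symmetric_nat_border_mat)
  have [measurable]: "(\<lambda>y. y (p, k)) \<in> borel_measurable (PiM J (\<lambda>_. lborel))" if "k < m" for k
    using assms(2) that by (subst measurable_lborel1[symmetric]) (auto intro: measurable_component_singleton)
  fix i j assume "i < Suc m" "j < Suc m"
  then show "(\<lambda>y. border_mat m M (\<lambda>k. y (p, k) - u k) c i j) \<in> borel_measurable (PiM J (\<lambda>_. lborel))"
    unfolding border_mat_def by (cases "i < m"; cases "j < m") auto
qed

text \<open>Fubini over the last entry \<open>t\<close> of the row, pivoting on \<open>M m m\<close> inside.\<close>
lemma nn_integral_border_row_Suc:
  assumes S: "symmetric_nat (Suc m) M" and P: "pos_def_nat (Suc m) M"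
  shows "(\<integral>\<^sup>+y. pd_det_powr (Suc (Suc m)) b (border_mat (Suc m) M (\<lambda>k. y (p, k) - u k) c)
      \<partial>PiM (Pair p ` {..<Suc m}) (\<lambda>_. lborel)) =
    (\<integral>\<^sup>+t. ennreal (M m m powr b) * (\<integral>\<^sup>+x. pd_det_powr (Suc m) b
      (border_mat m (schur_compl m M) (\<lambda>k. x (p, k) - (u k + M k m * (t - u m) / M m m))
        (c - (t - u m)\<^sup>2 / M m m)) \<partial>PiM (Pair p ` {..<m}) (\<lambda>_. lborel)) \<partial>lborel)"
proof -
  interpret product_sigma_finite "\<lambda>_. lborel :: real measure"
    by standard
  have S': "symmetric_nat m (schur_compl m M)"
    using S by (simp add: symmetric_nat_schur_compl)
  have "(\<integral>\<^sup>+y. pd_det_powr (Suc (Suc m)) b (border_mat (Suc m) M (\<lambda>k. y (p, k) - u k) c)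
        \<partial>PiM (Pair p ` {..<Suc m}) (\<lambda>_. lborel)) =
      (\<integral>\<^sup>+t. (\<integral>\<^sup>+x. pd_det_powr (Suc (Suc m)) b
        (border_mat (Suc m) M (\<lambda>k. (x((p, m) := t)) (p, k) - u k) c) \<partial>PiM (Pair p ` {..<m}) (\<lambda>_. lborel)) \<partial>lborel)"
    unfolding lessThan_Suc image_insert using S
    by (intro product_nn_integral_insert_rev borel_measurable_pd_det_powr_border_row) auto
  also have "\<dots> = (\<integral>\<^sup>+t. (\<integral>\<^sup>+x. ennreal (M m m powr b) * pd_det_powr (Suc m) b
      (border_mat m (schur_compl m M) (\<lambda>k. x (p, k) - (u k + M k m * (t - u m) / M m m))
        (c - (t - u m)\<^sup>2 / M m m)) \<partial>PiM (Pair p ` {..<m}) (\<lambda>_. lborel)) \<partial>lborel)"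
    unfolding pd_det_powr_border_mat_Suc[OF S P]
    by (intro nn_integral_cong arg_cong2[where f="(*)"] pd_det_powr_border_mat_cong)
      (auto simp: power2_eq_square algebra_simps)
  also have "\<dots> = (\<integral>\<^sup>+t. ennreal (M m m powr b) * (\<integral>\<^sup>+x. pd_det_powr (Suc m) b
      (border_mat m (schur_compl m M) (\<lambda>k. x (p, k) - (u k + M k m * (t - u m) / M m m))
        (c - (t - u m)\<^sup>2 / M m m)) \<partial>PiM (Pair p ` {..<m}) (\<lambda>_. lborel)) \<partial>lborel)"
    using S' by (intro nn_integral_cong nn_integral_cmult borel_measurable_pd_det_powr_border_row) auto
  finally show ?thesis .
qed

text \<open>Integrating out a bordering row (shifted by an arbitrary \<open>u\<close>), by induction on its length:
  the last entry contributes a one-dimensional Beta integral and the others form a shifted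
  bordering row of the Schur complement, whose determinant is \<open>det M / M m m\<close>.\<close>
lemma nn_integral_border_row:
  assumes b: "b > -1"
  shows "symmetric_nat m M \<Longrightarrow> pos_def_nat m M \<Longrightarrow>
    (\<integral>\<^sup>+y. pd_det_powr (Suc m) b (border_mat m M (\<lambda>k. y (p, k) - u k) c) \<partial>PiM (Pair p ` {..<m}) (\<lambda>_. lborel)) =
    ennreal (if c > 0 then det_nat m M powr (b + 1/2) * c powr (b + real m / 2) * row_beta_prod m b else 0)"
proof (induction m arbitrary: M c u)
  case 0
  then show ?case
    by (simp add: PiM_empty pd_det_powr_border_mat_0 row_beta_prod_def)
next
  case (Suc m M c u)
  define M' where "M' = schur_compl m M"
  define D where "D = det_nat m M'"
  define \<beta> where "\<beta> = b + real m / 2"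
  have Mmm: "M m m > 0"
    using Suc.prems(2) by (rule pos_def_nat_diag_pos) simp
  have S': "symmetric_nat m M'" and P': "pos_def_nat m M'"
    using Suc.prems pos_def_nat_schur_compl_iff[of m m M]
    by (simp_all add: M'_def symmetric_nat_schur_compl)
  have D: "D > 0"
    unfolding D_def using S' P' by (rule det_nat_pos)
  have K: "row_beta_prod m b > 0"
    using b by (rule row_beta_prod_pos)
  have "(\<integral>\<^sup>+y. pd_det_powr (Suc (Suc m)) b (border_mat (Suc m) M (\<lambda>k. y (p, k) - u k) c)
        \<partial>PiM (Pair p ` {..<Suc m}) (\<lambda>_. lborel)) =
      (\<integral>\<^sup>+t. ennreal (M m m powr b * D powr (b + 1/2) * row_beta_prod m b) *
        ennreal (if c - (t - u m)\<^sup>2 / M m m > 0 then (c - (t - u m)\<^sup>2 / M m m) powr \<beta> else 0) \<partial>lborel)"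
    unfolding nn_integral_border_row_Suc[OF Suc.prems] Suc.IH[OF S'[unfolded M'_def] P'[unfolded M'_def]]
    using D K by (intro nn_integral_cong) (auto simp: D_def M'_def \<beta>_def ennreal_mult'[symmetric] mult_ac)
  also have "\<dots> = ennreal (M m m powr b * D powr (b + 1/2) * row_beta_prod m b) *
      ennreal (if c > 0 then sqrt (c * M m m) * c powr \<beta> * Beta (1 / 2) (\<beta> + 1) else 0)"
    using nn_integral_shifted_beta[of \<beta> "M m m" c "u m"] b Mmm
    by (subst nn_integral_cmult) (auto simp: \<beta>_def)
  also have "\<dots> = ennreal (if c > 0 then det_nat (Suc m) M powr (b + 1/2) *
      c powr (b + real (Suc m) / 2) * row_beta_prod (Suc m) b else 0)"
  proof (cases "c > 0")
    case True
    have "det_nat (Suc m) M = M m m * D"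
      unfolding D_def M'_def using Mmm by (intro det_nat_schur_compl) auto
    then have "det_nat (Suc m) M powr (b + 1/2) * c powr (b + real (Suc m) / 2) * row_beta_prod (Suc m) b
        = M m m powr b * D powr (b + 1/2) * row_beta_prod m b *
          (sqrt (c * M m m) * c powr \<beta> * Beta (1 / 2) (\<beta> + 1))"
      using True Mmm D
      by (simp add: powr_mult powr_add real_sqrt_mult powr_half_sqrt[symmetric] row_beta_prod_Suc
          \<beta>_def add_divide_distrib mult_ac)
    moreover have "Beta (1 / 2) (\<beta> + 1) > 0"
      using b by (intro Beta_real_pos) (auto simp: \<beta>_def)
    ultimately show ?thesis
      using True Mmm D K by (simp add: ennreal_mult'[symmetric])
  qed simp
  finally show ?case .
qed

lemma nn_integral_border_row_one:
  assumes b: "b > -1" and S: "symmetric_nat m M"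
  shows "(\<integral>\<^sup>+y. pd_det_powr (Suc m) b (border_mat m M (\<lambda>k. y (p, k)) 1) \<partial>PiM (Pair p ` {..<m}) (\<lambda>_. lborel)) =
    ennreal (row_beta_prod m b) * pd_det_powr m (b + 1/2) M"
proof (cases "pos_def_nat m M")
  case True
  then have "det_nat m M > 0"
    using S by (intro det_nat_pos)
  then show ?thesis
    using nn_integral_border_row[OF b S True, of p "\<lambda>_. 0" 1] True row_beta_prod_pos[OF b, of m]
    by (simp add: pd_det_powr_def ennreal_mult'[symmetric] mult.commute)
next
  case False
  then have "pd_det_powr (Suc m) b (border_mat m M (\<lambda>k. y (p, k)) 1) = 0" for y
    using pos_def_nat_border_mat_imp by (auto simp: pd_det_powr_def)
  then show ?thesis
    using False by (simp add: pd_det_powr_def)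
qed

section \<open>Moments of the determinant of a random correlation matrix\<close>

definition corr_beta_prod :: "nat \<Rightarrow> real \<Rightarrow> real" where
  "corr_beta_prod N b = (\<Prod>j\<in>{1..<N}. Beta (b + (real j + 1) / 2) (1/2) ^ j)"

lemma corr_beta_prod_pos:
  assumes "b > -1"
  shows "corr_beta_prod N b > 0"
proof -
  have "b + (real j + 1) / 2 > 0" if "j \<ge> 1" for j
    using assms that by (simp add: field_simps)
  then show ?thesis
    unfolding corr_beta_prod_def by (intro prod_pos zero_less_power Beta_real_pos) auto
qed

lemma corr_beta_prod_Suc:
  "corr_beta_prod (Suc N) b = corr_beta_prod N b * Beta (b + (real N + 1) / 2) (1/2) ^ N"
  unfolding corr_beta_prod_def by (cases "N = 0") (simp_all add: prod.atLeastLessThan_Suc)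

lemma row_beta_prod_mult_corr_beta_prod:
  "row_beta_prod N b * corr_beta_prod N (b + 1/2) = corr_beta_prod (Suc N) b"
proof (induction N arbitrary: b)
  case 0
  then show ?case
    by (simp add: row_beta_prod_def corr_beta_prod_def)
next
  case (Suc N)
  have e: "b + real N / 2 + 1 = b + (2 + real N) / 2" "b + 1/2 + (real N + 1) / 2 = b + (2 + real N) / 2"
    "b + (real (Suc N) + 1) / 2 = b + (2 + real N) / 2"
    by (simp_all add: field_simps)
  have "Beta (1/2) (b + real N / 2 + 1) * Beta (b + 1/2 + (real N + 1) / 2) (1/2) ^ N
      = Beta (b + (real (Suc N) + 1) / 2) (1/2) ^ Suc N"
    unfolding e by (simp add: Beta_commute)
  then show ?case
    using Suc.IH[of b]
    by (simp add: row_beta_prod_Suc corr_beta_prod_Suc[of "Suc N"] corr_beta_prod_Suc[of N] mult_ac)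
qed

lemma symmetric_nat_corr_mat: "symmetric_nat N (corr_mat \<rho>)"
  by (auto simp: symmetric_nat_def corr_mat_def)

lemma measurable_corr_mat_entry:
  assumes "i < N" "j < N"
  shows "(\<lambda>\<rho>. corr_mat \<rho> i j) \<in> borel_measurable (corr_lebesgue N)"
proof -
  have [measurable]: "(\<lambda>\<rho>. \<rho> (k, l)) \<in> borel_measurable (corr_lebesgue N)" if "l < k" "k < N" for k l
    using that unfolding corr_lebesgue_def
    by (subst measurable_lborel1[symmetric]) (auto intro: measurable_component_singleton simp: corr_idx_def)
  show ?thesis
    using assms unfolding corr_mat_def by (cases "i = j"; cases "j < i") auto
qed

lemma sets_corr_set [measurable]: "corr_set N \<in> sets (corr_lebesgue N)"
  unfolding corr_set_def
  by (intro sets_pos_def_nat symmetric_nat_corr_mat measurable_corr_mat_entry)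

lemma borel_measurable_corr_det [measurable]: "corr_det N \<in> borel_measurable (corr_lebesgue N)"
  using borel_measurable_det_nat[OF measurable_corr_mat_entry] by (simp add: corr_det_def[abs_def])

lemma corr_det_pos: "\<rho> \<in> corr_set N \<Longrightarrow> corr_det N \<rho> > 0"
  unfolding corr_set_def corr_det_def using det_nat_pos[OF symmetric_nat_corr_mat] by auto

lemma corr_idx_Suc: "corr_idx (Suc N) = corr_idx N \<union> Pair N ` {..<N}"
  by (auto simp: corr_idx_def less_Suc_eq)

lemma finite_corr_idx: "finite (corr_idx N)"
  by (rule finite_subset[of _ "{..<N} \<times> {..<N}"]) (auto simp: corr_idx_def)

lemma corr_mat_merge:
  assumes "i < Suc N" "j < Suc N"
  shows "corr_mat (merge (corr_idx N) (Pair N ` {..<N}) (x, y)) i j =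
    border_mat N (corr_mat x) (\<lambda>k. y (N, k)) 1 i j"
  using assms by (auto simp: corr_mat_def border_mat_def merge_def corr_idx_def less_Suc_eq)

lemma nn_integral_corr_Suc:
  assumes b: "b > -1"
  shows "(\<integral>\<^sup>+\<rho>. pd_det_powr (Suc N) b (corr_mat \<rho>) \<partial>corr_lebesgue (Suc N)) =
    ennreal (row_beta_prod N b) * (\<integral>\<^sup>+\<rho>. pd_det_powr N (b + 1/2) (corr_mat \<rho>) \<partial>corr_lebesgue N)"
proof -
  interpret product_sigma_finite "\<lambda>_. lborel :: real measure"
    by standard
  note row = nn_integral_border_row_one[OF b symmetric_nat_corr_mat[of N], where p = N]
  have meas: "(\<lambda>\<rho>. pd_det_powr (Suc N) b (corr_mat \<rho>)) \<in>
      borel_measurable (PiM (corr_idx N \<union> Pair N ` {..<N}) (\<lambda>_. lborel))"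
    unfolding corr_idx_Suc[symmetric] corr_lebesgue_def[symmetric]
    by (rule borel_measurable_pd_det_powr) (auto intro: symmetric_nat_corr_mat measurable_corr_mat_entry)
  have "(\<integral>\<^sup>+\<rho>. pd_det_powr (Suc N) b (corr_mat \<rho>) \<partial>corr_lebesgue (Suc N)) =
      (\<integral>\<^sup>+x. (\<integral>\<^sup>+y. pd_det_powr (Suc N) b (corr_mat (merge (corr_idx N) (Pair N ` {..<N}) (x, y)))
        \<partial>PiM (Pair N ` {..<N}) (\<lambda>_. lborel)) \<partial>corr_lebesgue N)"
    unfolding corr_lebesgue_def corr_idx_Suc
    by (rule product_nn_integral_fold[OF _ finite_corr_idx _ meas]) (auto simp: corr_idx_def)
  also have "\<dots> = (\<integral>\<^sup>+x. ennreal (row_beta_prod N b) * pd_det_powr N (b + 1/2) (corr_mat x) \<partial>corr_lebesgue N)"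
  proof (intro nn_integral_cong)
    fix x
    have "pd_det_powr (Suc N) b (corr_mat (merge (corr_idx N) (Pair N ` {..<N}) (x, y))) =
        pd_det_powr (Suc N) b (border_mat N (corr_mat x) (\<lambda>k. y (N, k)) 1)" for y
      by (intro pd_det_powr_cong corr_mat_merge)
    then show "(\<integral>\<^sup>+y. pd_det_powr (Suc N) b (corr_mat (merge (corr_idx N) (Pair N ` {..<N}) (x, y)))
        \<partial>PiM (Pair N ` {..<N}) (\<lambda>_. lborel)) = ennreal (row_beta_prod N b) * pd_det_powr N (b + 1/2) (corr_mat x)"
      by (simp only: row)
  qed
  also have "\<dots> = ennreal (row_beta_prod N b) * (\<integral>\<^sup>+x. pd_det_powr N (b + 1/2) (corr_mat x) \<partial>corr_lebesgue N)"
    by (intro nn_integral_cmult borel_measurable_pd_det_powr)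
      (auto intro: symmetric_nat_corr_mat measurable_corr_mat_entry)
  finally show ?thesis .
qed

lemma nn_integral_corr_det_powr:
  "b > -1 \<Longrightarrow> (\<integral>\<^sup>+\<rho>. pd_det_powr N b (corr_mat \<rho>) \<partial>corr_lebesgue N) = ennreal (corr_beta_prod N b)"
proof (induction N arbitrary: b)
  case 0
  have "corr_idx 0 = {}"
    by (simp add: corr_idx_def)
  then show ?case
    by (simp add: corr_lebesgue_def PiM_empty pd_det_powr_def corr_beta_prod_def)
next
  case (Suc N)
  then show ?case
    using row_beta_prod_pos[OF Suc.prems, of N] corr_beta_prod_pos[of "b + 1/2" N]
    by (simp add: nn_integral_corr_Suc Suc.IH ennreal_mult'[symmetric] row_beta_prod_mult_corr_beta_prod)
qed

lemma has_bochner_integral_corr_det_powr: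
  assumes b: "b > -1"
  shows "has_bochner_integral (corr_lebesgue N)
    (\<lambda>\<rho>. indicator (corr_set N) \<rho> * corr_det N \<rho> powr b) (corr_beta_prod N b)"
proof (rule has_bochner_integral_nn_integral)
  have "(\<integral>\<^sup>+\<rho>. ennreal (indicator (corr_set N) \<rho> * corr_det N \<rho> powr b) \<partial>corr_lebesgue N)
      = (\<integral>\<^sup>+\<rho>. pd_det_powr N b (corr_mat \<rho>) \<partial>corr_lebesgue N)"
    by (intro nn_integral_cong) (simp add: pd_det_powr_def corr_set_def corr_det_def indicator_def)
  then show "(\<integral>\<^sup>+\<rho>. ennreal (indicator (corr_set N) \<rho> * corr_det N \<rho> powr b) \<partial>corr_lebesgue N)
      = ennreal (corr_beta_prod N b)"
    using b by (simp add: nn_integral_corr_det_powr)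
qed (use corr_beta_prod_pos[OF b, of N] in auto)

section \<open>The logarithmic moment\<close>

lemma abs_exp_minus_one_le: "\<bar>exp y - 1\<bar> \<le> \<bar>y\<bar> * exp \<bar>y\<bar>" for y :: real
proof (cases "y \<ge> 0")
  case True
  have "exp y * (1 - y) \<le> exp y * exp (- y)"
    using exp_ge_add_one_self[of "-y"] by (intro mult_left_mono) auto
  then show ?thesis
    using True by (simp add: exp_minus field_simps)
next
  case False
  have "1 - exp y \<le> - y"
    using exp_ge_add_one_self[of y] by linarith
  also have "- y * 1 \<le> - y * exp (- y)"
    using False by (intro mult_left_mono) auto
  finally show ?thesis
    using False by (simp add: abs_if)
qed

lemma abs_powr_diff_quotient_le:
  fixes x s \<delta> :: real
  assumes x: "x > 0" and s: "0 < s" "s \<le> \<delta>"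
  shows "\<bar>x powr a * ((x powr s - 1) / s)\<bar> \<le> (x powr (a + 2 * \<delta>) + x powr (a - 2 * \<delta>)) / \<delta>"
proof -
  define l where "l = ln x"
  have "\<bar>x powr s - 1\<bar> \<le> \<bar>s * l\<bar> * exp \<bar>s * l\<bar>"
    using x abs_exp_minus_one_le[of "s * l"] by (simp add: powr_def l_def)
  also have "\<dots> \<le> s * \<bar>l\<bar> * exp (\<delta> * \<bar>l\<bar>)"
    using s by (auto simp: abs_mult intro!: mult_left_mono mult_right_mono)
  finally have "\<bar>(x powr s - 1) / s\<bar> \<le> \<bar>l\<bar> * exp (\<delta> * \<bar>l\<bar>)"
    using s by (simp add: field_simps abs_divide)
  also have "\<dots> \<le> exp (\<delta> * \<bar>l\<bar>) / \<delta> * exp (\<delta> * \<bar>l\<bar>)"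
  proof -
    have "\<delta> * \<bar>l\<bar> \<le> exp (\<delta> * \<bar>l\<bar>)"
      using exp_ge_add_one_self[of "\<delta> * \<bar>l\<bar>"] by linarith
    then have "\<bar>l\<bar> \<le> exp (\<delta> * \<bar>l\<bar>) / \<delta>"
      using s by (simp add: field_simps)
    then show ?thesis
      by (intro mult_right_mono) auto
  qed
  also have "\<dots> = exp (2 * \<delta> * \<bar>l\<bar>) / \<delta>"
    by (simp add: exp_add[symmetric])
  also have "\<dots> \<le> (x powr (2 * \<delta>) + x powr (- (2 * \<delta>))) / \<delta>"
    using s x by (intro divide_right_mono) (auto simp: powr_def l_def abs_if add_increasing2 add_increasing)
  finally have unweighted: "\<bar>(x powr s - 1) / s\<bar> \<le> (x powr (2 * \<delta>) + x powr (- (2 * \<delta>))) / \<delta>" .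
  have "\<bar>x powr a * ((x powr s - 1) / s)\<bar> = x powr a * \<bar>(x powr s - 1) / s\<bar>"
    by (simp add: abs_mult)
  also have "\<dots> \<le> x powr a * ((x powr (2 * \<delta>) + x powr (- (2 * \<delta>))) / \<delta>)"
    using unweighted by (intro mult_left_mono) auto
  also have "\<dots> = (x powr (a + 2 * \<delta>) + x powr (a - 2 * \<delta>)) / \<delta>"
    by (simp add: powr_add[symmetric] field_simps)
  finally show ?thesis .
qed

lemma powr_diff_quotient_tendsto_ln:
  fixes x :: real
  assumes "x > 0"
  shows "((\<lambda>s. (x powr s - 1) / s) \<longlongrightarrow> ln x) (at 0)"
proof -
  have "((\<lambda>s. exp (s * ln x)) has_real_derivative exp (0 * ln x) * ln x) (at 0)"
    by (auto intro!: derivative_eq_intros)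
  then show ?thesis
    using assms by (simp add: DERIV_def powr_def)
qed

text \<open>Differentiation under the integral sign: the difference quotients of \<open>b \<mapsto> d x powr b\<close> at
  \<open>a\<close> with steps \<open>h \<le> \<delta>\<close> are dominated by \<open>(d x powr (a + 2 * \<delta>) + d x powr (a - 2 * \<delta>)) / \<delta>\<close>.\<close>
lemma has_bochner_integral_powr_ln:
  fixes d :: "'a \<Rightarrow> real" and G :: "real \<Rightarrow> real"
  assumes moments: "\<And>b. b > b\<^sub>0 \<Longrightarrow> has_bochner_integral M (\<lambda>x. indicator A x * d x powr b) (G b)"
    and [measurable]: "A \<in> sets M" "d \<in> borel_measurable M"
    and pos: "\<And>x. x \<in> A \<Longrightarrow> d x > 0"
    and a: "a > b\<^sub>0" and G': "(G has_real_derivative G') (at a)"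
  shows "has_bochner_integral M (\<lambda>x. indicator A x * d x powr a * ln (d x)) G'"
proof -
  define \<delta> where "\<delta> = (a - b\<^sub>0) / 4"
  define h where "h n = \<delta> / Suc n" for n :: nat
  define f where "f n x = (indicator A x * d x powr (a + h n) - indicator A x * d x powr a) / h n" for n x
  define w where "w x = (indicator A x * d x powr (a + 2 * \<delta>) + indicator A x * d x powr (a - 2 * \<delta>)) / \<delta>"
    for x
  have \<delta>: "\<delta> > 0"
    using a by (simp add: \<delta>_def)
  have h: "0 < h n" "h n \<le> \<delta>" for n
    using \<delta> by (simp_all add: h_def field_simps)
  have f_integral: "integral\<^sup>L M (f n) = (G (a + h n) - G a) / h n" for n
    using moments[of "a + h n"] moments[OF a] h[of n] a unfolding f_def
    by (simp add: has_bochner_integral_iff Bochner_Integration.integral_diff)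
  have "a + 2 * \<delta> > b\<^sub>0" "a - 2 * \<delta> > b\<^sub>0"
    using a by (simp_all add: \<delta>_def field_simps)
  then have w: "integrable M w"
    using moments unfolding w_def
    by (intro integrable_divide integrable_add) (simp_all add: has_bochner_integral_iff)
  have f_eq: "f n x = indicator A x * (d x powr a * ((d x powr h n - 1) / h n))" for n x
    using pos[of x] by (cases "x \<in> A") (simp_all add: f_def powr_add field_simps)
  have "h = (\<lambda>n. \<delta> * inverse (real (Suc n)))"
    by (simp add: h_def fun_eq_iff divide_inverse)
  then have h_lim: "filterlim h (at 0) sequentially"
    using \<delta> tendsto_mult_right_zero[OF LIMSEQ_inverse_real_of_nat, of \<delta>] by (simp add: filterlim_at)
  have lim: "(\<lambda>n. f n x) \<longlonglongrightarrow> indicator A x * d x powr a * ln (d x)" for x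
  proof (cases "x \<in> A")
    case True
    have "(\<lambda>n. (d x powr h n - 1) / h n) \<longlonglongrightarrow> ln (d x)"
      using filterlim_compose[OF powr_diff_quotient_tendsto_ln[OF pos[OF True]] h_lim] .
    from tendsto_mult_left[OF this, of "d x powr a"] show ?thesis
      using True by (simp add: f_eq)
  qed (simp add: f_def)
  have bound: "\<bar>f n x\<bar> \<le> w x" for n x
  proof (cases "x \<in> A")
    case True
    then show ?thesis
      using abs_powr_diff_quotient_le[OF pos[OF True] h(1)[of n] h(2)[of n], where a = a]
      by (simp add: f_eq w_def)
  qed (simp add: f_def w_def)
  have f_meas: "f n \<in> borel_measurable M" for n
    unfolding f_def by measurable
  have g_meas: "(\<lambda>x. indicator A x * d x powr a * ln (d x)) \<in> borel_measurable M"
    by measurable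
  have "(\<lambda>n. integral\<^sup>L M (f n)) \<longlonglongrightarrow> integral\<^sup>L M (\<lambda>x. indicator A x * d x powr a * ln (d x))"
    by (rule integral_dominated_convergence[OF g_meas f_meas w]) (simp_all add: lim bound)
  moreover have "(\<lambda>n. integral\<^sup>L M (f n)) \<longlonglongrightarrow> G'"
    using G' h_lim unfolding f_integral DERIV_def
    by (auto intro: filterlim_compose)
  moreover have "integrable M (\<lambda>x. indicator A x * d x powr a * ln (d x))"
    by (rule integrable_dominated_convergence[where s = f, OF g_meas f_meas w]) (simp_all add: lim bound)
  ultimately show ?thesis
    by (simp add: has_bochner_integral_iff LIMSEQ_unique)
qed

lemma Beta_power_has_real_derivative:
  fixes a c y :: real
  assumes "a + c > 0" "y > 0"
  shows "((\<lambda>b. Beta (b + c) y ^ j) has_real_derivative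
    real j * (Digamma (a + c) - Digamma (a + c + y)) * Beta (a + c) y ^ j) (at a)"
proof -
  have "a + c \<notin> \<int>\<^sub>\<le>\<^sub>0" "a + c + y \<notin> \<int>\<^sub>\<le>\<^sub>0"
    using assms by (auto dest!: nonpos_Ints_nonpos)
  then have "((\<lambda>b. Beta (b + c) y) has_real_derivative
      Beta (a + c) y * (Digamma (a + c) - Digamma (a + c + y)) * 1) (at a)"
    by (intro DERIV_chain2[where f="\<lambda>x. Beta x y", OF has_field_derivative_Beta1])
      (auto intro!: derivative_eq_intros)
  then have "((\<lambda>b. Beta (b + c) y ^ j) has_real_derivative real j *
      (Beta (a + c) y * (Digamma (a + c) - Digamma (a + c + y)) * 1 * Beta (a + c) y ^ (j - Suc 0))) (at a)"
    by (rule DERIV_power)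
  moreover have "real j * (Beta (a + c) y * (Digamma (a + c) - Digamma (a + c + y)) * 1 *
      Beta (a + c) y ^ (j - Suc 0)) = real j * (Digamma (a + c) - Digamma (a + c + y)) * Beta (a + c) y ^ j"
    by (cases j) (simp_all add: mult_ac)
  ultimately show ?thesis
    by (rule DERIV_cong)
qed

lemma corr_beta_prod_has_real_derivative:
  assumes a: "a > -1"
  shows "(corr_beta_prod N has_real_derivative corr_beta_prod N a *
    (\<Sum>j\<in>{1..<N}. real j * (Digamma (a + (real j + 1) / 2) - Digamma (a + 1 + real j / 2)))) (at a)"
proof -
  define B where "B j b = Beta (b + (real j + 1) / 2) (1/2)" for j b
  define \<Psi> where "\<Psi> j = Digamma (a + (real j + 1) / 2) - Digamma (a + 1 + real j / 2)" for j
  have B_pos: "B j a > 0" if "j \<ge> 1" for j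
    unfolding B_def using a that by (intro Beta_real_pos) (auto simp: field_simps)
  have B_deriv: "((\<lambda>b. B j b ^ j) has_real_derivative real j * \<Psi> j * B j a ^ j) (at a)"
    if "j \<ge> 1" for j
  proof -
    have "a + (real j + 1) / 2 > 0"
      using a that by (simp add: field_simps)
    moreover have eq: "a + (real j + 1) / 2 + 1/2 = a + 1 + real j / 2"
      by (simp add: field_simps)
    ultimately show ?thesis
      using Beta_power_has_real_derivative[of a "(real j + 1) / 2" "1/2" j]
      unfolding B_def \<Psi>_def eq by simp
  qed
  have "(corr_beta_prod N has_real_derivative corr_beta_prod N a *
      (\<Sum>j\<in>{1..<N}. real j * \<Psi> j * B j a ^ j / B j a ^ j)) (at a)"
    unfolding corr_beta_prod_def[abs_def] B_def[symmetric]
  proof (rule has_field_derivative_prod')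
    fix j assume "j \<in> {1..<N}"
    then have "j \<ge> 1"
      by simp
    show "B j a ^ j \<noteq> 0"
      using B_pos[OF \<open>j \<ge> 1\<close>] by simp
    show "((\<lambda>b. B j b ^ j) has_real_derivative real j * \<Psi> j * B j a ^ j) (at a)"
      using B_deriv[OF \<open>j \<ge> 1\<close>] .
  qed
  moreover have "(\<Sum>j\<in>{1..<N}. real j * \<Psi> j * B j a ^ j / B j a ^ j) = (\<Sum>j\<in>{1..<N}. real j * \<Psi> j)"
  proof (intro sum.cong refl)
    fix j assume "j \<in> {1..<N}"
    then have "B j a ^ j \<noteq> 0"
      using B_pos[of j] by simp
    then show "real j * \<Psi> j * B j a ^ j / B j a ^ j = real j * \<Psi> j"
      by simp
  qed
  ultimately show ?thesis
    by (simp add: \<Psi>_def)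
qed

lemma corr_const_eq: "a > -1 \<Longrightarrow> corr_const N a = corr_beta_prod N a"
  using has_bochner_integral_corr_det_powr[of a N]
  by (simp add: corr_const_def set_lebesgue_integral_def has_bochner_integral_integral_eq)

lemma has_bochner_integral_corr_det_moment:
  assumes a: "a > -1" and s: "a + s > -1"
  shows "has_bochner_integral (corr_lebesgue N)
    (\<lambda>\<rho>. indicator (corr_set N) \<rho> *\<^sub>R (corr_det N \<rho> powr s * (corr_det N \<rho> powr a / corr_const N a)))
    (corr_beta_prod N (a + s) / corr_beta_prod N a)"
proof -
  have "(\<lambda>\<rho>. indicator (corr_set N) \<rho> *\<^sub>R (corr_det N \<rho> powr s * (corr_det N \<rho> powr a / corr_const N a))) =
      (\<lambda>\<rho>. indicator (corr_set N) \<rho> * corr_det N \<rho> powr (a + s) / corr_beta_prod N a)"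
    using a by (auto simp: fun_eq_iff indicator_def corr_const_eq powr_add corr_det_pos)
  then show ?thesis
    using has_bochner_integral_corr_det_powr[OF s, of N] by (simp add: has_bochner_integral_divide_zero)
qed

lemma has_bochner_integral_corr_log_moment:
  assumes a: "a > -1"
  shows "has_bochner_integral (corr_lebesgue N)
    (\<lambda>\<rho>. indicator (corr_set N) \<rho> *\<^sub>R (ln (corr_det N \<rho>) * (corr_det N \<rho> powr a / corr_const N a)))
    (\<Sum>j\<in>{1..<N}. real j * (Digamma (a + (real j + 1) / 2) - Digamma (a + 1 + real j / 2)))"
proof -
  have ln_moment: "has_bochner_integral (corr_lebesgue N)
      (\<lambda>\<rho>. indicator (corr_set N) \<rho> * corr_det N \<rho> powr a * ln (corr_det N \<rho>))
      (corr_beta_prod N a *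
        (\<Sum>j\<in>{1..<N}. real j * (Digamma (a + (real j + 1) / 2) - Digamma (a + 1 + real j / 2))))"
    using a by (intro has_bochner_integral_powr_ln[where b\<^sub>0 = "-1" and G = "corr_beta_prod N"]
        has_bochner_integral_corr_det_powr corr_beta_prod_has_real_derivative corr_det_pos) auto
  have "has_bochner_integral (corr_lebesgue N)
      (\<lambda>\<rho>. indicator (corr_set N) \<rho> * corr_det N \<rho> powr a * ln (corr_det N \<rho>) / corr_beta_prod N a)
      (\<Sum>j\<in>{1..<N}. real j * (Digamma (a + (real j + 1) / 2) - Digamma (a + 1 + real j / 2)))"
    using has_bochner_integral_divide_zero[OF ln_moment, where c = "corr_beta_prod N a"]
      corr_beta_prod_pos[OF a, of N] by simp
  moreover have "(\<lambda>\<rho>. indicator (corr_set N) \<rho> *\<^sub>R (ln (corr_det N \<rho>) * (corr_det N \<rho> powr a / corr_const N a))) =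
      (\<lambda>\<rho>. indicator (corr_set N) \<rho> * corr_det N \<rho> powr a * ln (corr_det N \<rho>) / corr_beta_prod N a)"
    using a by (simp add: fun_eq_iff corr_const_eq mult_ac)
  ultimately show ?thesis
    by simp
qed

theorem mainTheorem3:
  fixes N :: nat and a s :: real
  assumes "N \<ge> 2" and "a > -1" and "s > -1 - a"
  shows "set_integrable (corr_lebesgue N) (corr_set N) (\<lambda>\<rho>. corr_det N \<rho> powr a)
    \<and> corr_const N a > 0
    \<and> set_integrable (corr_lebesgue N) (corr_set N)
        (\<lambda>\<rho>. corr_det N \<rho> powr s * (corr_det N \<rho> powr a / corr_const N a))
    \<and> (LINT \<rho>:corr_set N|corr_lebesgue N. corr_det N \<rho> powr s * (corr_det N \<rho> powr a / corr_const N a))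
        = (\<Prod>j=1..N-1. (Beta (a + s + (real j + 1) / 2) (1/2) / Beta (a + (real j + 1) / 2) (1/2)) ^ j)
    \<and> set_integrable (corr_lebesgue N) (corr_set N)
        (\<lambda>\<rho>. ln (corr_det N \<rho>) * (corr_det N \<rho> powr a / corr_const N a))
    \<and> (LINT \<rho>:corr_set N|corr_lebesgue N. ln (corr_det N \<rho>) * (corr_det N \<rho> powr a / corr_const N a))
        = (\<Sum>j=1..N-1. real j * (Digamma (a + (real j + 1) / 2) - Digamma (a + 1 + real j / 2)))"
proof -
  have "{1..N-1} = {1..<N}"
    using assms(1) by auto
  moreover have "a + s > -1"
    using assms(3) by simp
  ultimately show ?thesis
    using has_bochner_integral_corr_det_powr[OF assms(2)] corr_beta_prod_pos[OF assms(2)]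
      has_bochner_integral_corr_det_moment[OF assms(2)] has_bochner_integral_corr_log_moment[OF assms(2)]
    by (simp add: set_integrable_def set_lebesgue_integral_def has_bochner_integral_iff corr_const_eq[OF assms(2)]
        corr_beta_prod_def prod_dividef power_divide)
qed

end
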